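(* Let $N\ge 1$, let $L\in\mathbb{R}^{N\times N}$ be invertible and set $C=LL^T$. Let $D$ be the diagonal matrix with $D_{ii}=\sqrt{C_{ii}}$ (the standard deviations of $X\sim\mathcal N(0,C)$). Suppose $C$ is diagonally dominant in the sense that there is $\delta<1$ with $\sum_{j\neq i}|C_{ij}/C_{ii}|\le\delta$ for every $i$. Then $$\kappa(D^{-1}L)\le N^{1/4}\sqrt{\frac{1+\delta}{1-\delta}}.$$
   Context: For an invertible matrix $B\in\mathbb{R}^{N\times N}$, the condition number is $\kappa(B):=\|B\|_2\,\|B^{-1}\|_{S^4}$, where $\|\cdot\|_2$ is the spectral norm (largest singular value) and $\|A\|_{S^4}:=\left(\sum_{n=1}^N s_n^4\right)^{1/4}$ is the fourth Schatten norm, $s_1,\dots,s_N$ being the singular values of $A$. *)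

theory Defs
  imports "HOL-Analysis.Analysis"
begin

definition diag_mat :: "real^'n \<Rightarrow> real^'n^'n" where
  "diag_mat s = (\<chi> i j. if i = j then s $ i else 0)"

definition singular_values :: "real^'n^'n \<Rightarrow> real^'n" where
  "singular_values A = (SOME s. (\<forall>i. s $ i \<ge> 0) \<and>
     (\<exists>U V. orthogonal_matrix U \<and> orthogonal_matrix V \<and>
            A = U ** diag_mat s ** transpose V))"

definition spec_norm :: "real^'n^'n \<Rightarrow> real" where
  "spec_norm A = Max (range (\<lambda>i. singular_values A $ i))"

definition schatten4 :: "real^'n^'n \<Rightarrow> real" where
  "schatten4 A = (\<Sum>i\<in>UNIV. (singular_values A $ i) ^ 4) powr (1/4)"

definition kappa :: "real^'n^'n \<Rightarrow> real" where
  "kappa B = spec_norm B * schatten4 (matrix_inv B)"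

end

theory Submission
  imports Defs
begin

(* With D = diag(sqrt C_ii) and B = D^-1 L, the Gram matrix B B^T = D^-1 C D^-1 is similar to
   diag(1/C_ii) C, which has unit diagonal and off-diagonal absolute row sums at most delta, so by
   Gershgorin every eigenvalue of B B^T lies in [1 - delta, 1 + delta].  The squared singular
   values of B are eigenvalues of B B^T and those of B^-1 are eigenvalues of (B B^T)^-1; hence
   ||B||_2 <= sqrt(1 + delta), and each of the N singular values of B^-1 is at most
   1/sqrt(1 - delta), so ||B^-1||_S4 <= N^(1/4)/sqrt(1 - delta).  Singular value decompositions
   come from the spectral theorem for real symmetric matrices, obtained by maximising the
   Rayleigh quotient on invariant subspaces. *)

lemma diag_mat_mult_vec_nth [simp]: "(diag_mat a *v x) $ i = a $ i * x $ i"
  by (simp add: diag_mat_def matrix_vector_mult_def mult_delta_left)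

lemma diag_mat_mult_nth [simp]: "(diag_mat a ** M) $ i $ j = a $ i * M $ i $ j"
  by (simp add: diag_mat_def matrix_matrix_mult_def mult_delta_left)

lemma diag_mat_mult_diag_mat: "diag_mat a ** diag_mat b = diag_mat (\<chi> i. a $ i * b $ i)"
  by (simp add: vec_eq_iff) (simp add: diag_mat_def)

lemma transpose_diag_mat [simp]: "transpose (diag_mat a) = diag_mat a"
  by (simp add: diag_mat_def transpose_def vec_eq_iff)

lemma diag_mat_one [simp]: "diag_mat (\<chi> i. 1) = mat 1"
  by (simp add: diag_mat_def mat_def vec_eq_iff)

lemma diag_mat_axis: "diag_mat a *v axis i 1 = a $ i *\<^sub>R axis i 1"
  by (simp add: vec_eq_iff axis_def)

lemma matrix_inv:
  fixes A :: "real^'n^'n"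
  assumes "invertible A"
  shows "A ** matrix_inv A = mat 1" and "matrix_inv A ** A = mat 1"
  using someI_ex[OF assms[unfolded invertible_def]] by (simp_all add: matrix_inv_def)

lemma matrix_inv_unique:
  fixes A B :: "real^'n^'n"
  assumes "A ** B = mat 1"
  shows "matrix_inv A = B"
proof -
  have "invertible A" using assms invertible_right_inverse by blast
  then have "matrix_inv A = (matrix_inv A ** A) ** B" by (simp add: matrix_mul_assoc[symmetric] assms)
  then show ?thesis by (simp add: matrix_inv(2)[OF \<open>invertible A\<close>])
qed

lemma matrix_inv_diag_mat:
  assumes "\<And>i. a $ i \<noteq> 0"
  shows "matrix_inv (diag_mat a) = diag_mat (\<chi> i. inverse (a $ i))"
  by (rule matrix_inv_unique) (simp add: diag_mat_mult_diag_mat assms)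

lemma invertible_diag_mat:
  assumes "\<And>i. a $ i \<noteq> 0"
  shows "invertible (diag_mat a)"
  unfolding invertible_right_inverse
  by (rule exI[of _ "diag_mat (\<chi> i. inverse (a $ i))"])
    (simp add: diag_mat_mult_diag_mat assms)

lemma orthogonal_matrix_invertible:
  "orthogonal_matrix U \<Longrightarrow> invertible U"
  unfolding orthogonal_matrix_def invertible_def by blast

lemma inner_matrix_vector_mult_transpose:
  fixes A :: "real^'n^'m"
  shows "(A *v x) \<bullet> y = x \<bullet> (transpose A *v y)"
  by (metis dot_lmul_matrix inner_commute transpose_matrix_vector)

definition eigenvalue :: "real^'n^'n \<Rightarrow> real \<Rightarrow> bool" where
  "eigenvalue A \<mu> \<longleftrightarrow> (\<exists>v. v \<noteq> 0 \<and> A *v v = \<mu> *\<^sub>R v)"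

lemma eigenvalue_diag_mat: "eigenvalue (diag_mat a) (a $ i)"
  unfolding eigenvalue_def using diag_mat_axis[of a i] by (metis axis_eq_0_iff zero_neq_one)

lemma eigenvalue_similar:
  assumes "S ** A = B ** S" and "invertible S" and "eigenvalue A \<mu>"
  shows "eigenvalue B \<mu>"
proof -
  obtain v where v: "v \<noteq> 0" "A *v v = \<mu> *\<^sub>R v" using assms(3) by (auto simp: eigenvalue_def)
  have "S *v v \<noteq> 0"
    using v(1) inj_matrix_vector_mult[OF assms(2)] by (metis injD matrix_vector_mult_0_right)
  moreover have "B *v (S *v v) = S *v (A *v v)"
    by (simp add: matrix_vector_mul_assoc assms(1))
  then have "B *v (S *v v) = \<mu> *\<^sub>R (S *v v)"
    by (simp add: v(2) matrix_vector_mult_scaleR)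
  ultimately show ?thesis by (auto simp: eigenvalue_def)
qed

lemma eigenvalue_inverse:
  assumes "A ** X = mat 1" and "eigenvalue X \<mu>"
  shows "eigenvalue A (inverse \<mu>)"
proof -
  obtain v where v: "v \<noteq> 0" "X *v v = \<mu> *\<^sub>R v" using assms(2) by (auto simp: eigenvalue_def)
  have "v = A *v (X *v v)" by (simp add: matrix_vector_mul_assoc assms(1))
  then have v_eq: "v = \<mu> *\<^sub>R (A *v v)" by (simp add: v(2) matrix_vector_mult_scaleR)
  then have "\<mu> \<noteq> 0" using v(1) by auto
  then have "A *v v = inverse \<mu> *\<^sub>R v" by (subst v_eq) simp
  then show ?thesis using v(1) by (auto simp: eigenvalue_def)
qed

lemma gershgorin:
  assumes "eigenvalue A \<mu>"
  obtains i where "\<bar>\<mu> - A $ i $ i\<bar> \<le> (\<Sum>j\<in>UNIV - {i}. \<bar>A $ i $ j\<bar>)"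
proof -
  obtain v where v: "v \<noteq> 0" "A *v v = \<mu> *\<^sub>R v" using assms by (auto simp: eigenvalue_def)
  have "Max (range (\<lambda>j. \<bar>v $ j\<bar>)) \<in> range (\<lambda>j. \<bar>v $ j\<bar>)" by (rule Max_in) auto
  then obtain i where i: "Max (range (\<lambda>j. \<bar>v $ j\<bar>)) = \<bar>v $ i\<bar>" by blast
  have max: "\<bar>v $ j\<bar> \<le> \<bar>v $ i\<bar>" for j unfolding i[symmetric] by (rule Max_ge) auto
  have "v $ i \<noteq> 0" using v(1) max by (metis abs_le_zero_iff abs_zero vec_eq_iff zero_index)
  have "(\<mu> - A $ i $ i) * v $ i = (\<Sum>j\<in>UNIV - {i}. A $ i $ j * v $ j)"
    using arg_cong[OF v(2), of "\<lambda>w. w $ i"]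
    by (simp add: matrix_vector_mult_def sum.remove[of UNIV i] algebra_simps)
  then have "\<bar>\<mu> - A $ i $ i\<bar> * \<bar>v $ i\<bar> \<le> (\<Sum>j\<in>UNIV - {i}. \<bar>A $ i $ j\<bar> * \<bar>v $ j\<bar>)"
    by (metis (no_types, lifting) abs_mult sum_abs sum.cong)
  also have "\<dots> \<le> (\<Sum>j\<in>UNIV - {i}. \<bar>A $ i $ j\<bar>) * \<bar>v $ i\<bar>"
    by (simp add: sum_distrib_right sum_mono mult_left_mono max)
  finally show ?thesis using that \<open>v $ i \<noteq> 0\<close> by simp
qed

lemma linear_coeff_zero_if_quadratic_nonneg:
  fixes b q :: real
  assumes "\<And>t. 0 \<le> 2 * t * b + t\<^sup>2 * q" and "q \<ge> 0"
  shows "b = 0"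
proof -
  have "0 \<le> 2 * (- b / (q + 1)) * b + (- b / (q + 1))\<^sup>2 * q" by (rule assms(1))
  also have "\<dots> = - b\<^sup>2 * (q + 2) / (q + 1)\<^sup>2"
  proof -
    have "q + 1 \<noteq> 0" using assms(2) by simp
    then show ?thesis by (simp add: divide_simps power2_eq_square) (simp add: algebra_simps)
  qed
  finally have "b\<^sup>2 * (q + 2) \<le> 0"
    using assms(2) by (simp add: divide_le_0_iff)
  then show ?thesis using assms(2) by (simp add: mult_le_0_iff)
qed

lemma eigenvector_if_rayleigh_maximal:
  fixes A :: "real^'n^'n"
  assumes sym: "transpose A = A" and S: "subspace S" and "x \<in> S" and "A *v x \<in> S"
    and le: "\<And>z. z \<in> S \<Longrightarrow> z \<bullet> (A *v z) \<le> \<mu> * (z \<bullet> z)"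
    and eq: "x \<bullet> (A *v x) = \<mu> * (x \<bullet> x)"
  shows "A *v x = \<mu> *\<^sub>R x"
proof -
  define r where "r = \<mu> *\<^sub>R x - A *v x"
  have "r \<in> S" unfolding r_def using assms by (simp add: subspace_diff subspace_scale)
  have "r \<bullet> y = 0" if "y \<in> S" for y
  proof (rule linear_coeff_zero_if_quadratic_nonneg)
    fix t
    have "x + t *\<^sub>R y \<in> S" using S \<open>x \<in> S\<close> \<open>y \<in> S\<close> by (simp add: subspace_add subspace_scale)
    from le[OF this] eq
    show "0 \<le> 2 * t * (r \<bullet> y) + t\<^sup>2 * (\<mu> * (y \<bullet> y) - y \<bullet> (A *v y))"
      using inner_matrix_vector_mult_transpose[of A y x] sym
      by (simp add: r_def matrix_vector_right_distrib matrix_vector_mult_scaleR inner_add_left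
          inner_add_right inner_diff_left inner_commute power2_eq_square algebra_simps)
    show "0 \<le> \<mu> * (y \<bullet> y) - y \<bullet> (A *v y)" using le[OF \<open>y \<in> S\<close>] by simp
  qed
  from this[OF \<open>r \<in> S\<close>] show ?thesis by (simp add: r_def)
qed

lemma rayleigh_maximizer_exists:
  fixes A :: "real^'n^'n"
  assumes S: "subspace S" and "S \<noteq> {0}"
  obtains x where "x \<in> S" and "norm x = 1"
    and "\<And>z. z \<in> S \<Longrightarrow> z \<bullet> (A *v z) \<le> (x \<bullet> (A *v x)) * (z \<bullet> z)"
proof -
  let ?K = "S \<inter> sphere 0 1"
  obtain y where "y \<in> S" "y \<noteq> 0" using assms subspace_0 by blast
  then have "y /\<^sub>R norm y \<in> ?K" using S by (simp add: subspace_scale)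
  moreover have "compact ?K" using closed_subspace[OF S] by (simp add: closed_Int_compact)
  moreover have "continuous_on ?K (\<lambda>x. x \<bullet> (A *v x))"
    by (intro continuous_intros linear_continuous_on matrix_vector_mul_bounded_linear)
  ultimately obtain x where "x \<in> ?K" and max: "\<And>z. z \<in> ?K \<Longrightarrow> z \<bullet> (A *v z) \<le> x \<bullet> (A *v x)"
    using continuous_attains_sup[of ?K] by blast
  have bound: "z \<bullet> (A *v z) \<le> (x \<bullet> (A *v x)) * (z \<bullet> z)" if "z \<in> S" for z
  proof (cases "z = 0")
    case False
    then have "z /\<^sub>R norm z \<in> ?K" using S \<open>z \<in> S\<close> by (simp add: subspace_scale)
    from max[OF this] False show ?thesis
      by (simp add: matrix_vector_mult_scaleR divide_simps dot_square_norm power2_eq_square)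
  qed simp
  show ?thesis using \<open>x \<in> ?K\<close> bound by (intro that) auto
qed

lemma symmetric_eigenvector_in_invariant_subspace:
  fixes A :: "real^'n^'n"
  assumes sym: "transpose A = A" and S: "subspace S" and inv: "\<And>x. x \<in> S \<Longrightarrow> A *v x \<in> S"
    and "S \<noteq> {0}"
  obtains x \<mu> where "x \<in> S" and "norm x = 1" and "A *v x = \<mu> *\<^sub>R x"
proof -
  obtain x where x: "x \<in> S" "norm x = 1"
    and max: "\<And>z. z \<in> S \<Longrightarrow> z \<bullet> (A *v z) \<le> (x \<bullet> (A *v x)) * (z \<bullet> z)"
    using rayleigh_maximizer_exists[OF S \<open>S \<noteq> {0}\<close>] by blast
  have "x \<bullet> x = 1" using x(2) by (simp add: norm_eq_1)
  then have "A *v x = (x \<bullet> (A *v x)) *\<^sub>R x"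
    by (intro eigenvector_if_rayleigh_maximal[OF sym S x(1) inv[OF x(1)] max]) simp_all
  with x that show ?thesis by blast
qed

lemma symmetric_orthonormal_eigenvectors_in_invariant_subspace:
  fixes A :: "real^'n^'n"
  assumes sym: "transpose A = A"
  shows "subspace S \<Longrightarrow> (\<And>x. x \<in> S \<Longrightarrow> A *v x \<in> S) \<Longrightarrow> dim S = n \<Longrightarrow>
    \<exists>E. finite E \<and> E \<subseteq> S \<and> pairwise orthogonal E \<and> card E = n \<and>
        (\<forall>e\<in>E. norm e = 1 \<and> (\<exists>\<mu>. A *v e = \<mu> *\<^sub>R e))"
proof (induction n arbitrary: S)
  case 0
  show ?case by (rule exI[of _ "{}"]) simp
next
  case (Suc n)
  then have "S \<noteq> {0}" by (metis dim_eq_0 nat.distinct(1) subset_refl)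
  then obtain x \<mu> where x: "x \<in> S" "norm x = 1" "A *v x = \<mu> *\<^sub>R x"
    using symmetric_eigenvector_in_invariant_subspace[OF sym Suc.prems(1,2)] by blast
  define S' where "S' = {y \<in> S. x \<bullet> y = 0}"
  have "S' = {y \<in> S. \<forall>z \<in> span {x}. orthogonal z y}"
    by (auto simp: S'_def span_singleton orthogonal_def)
  then have "dim S' + dim (span {x}) = dim S"
    using dim_subspace_orthogonal_to_vectors[of "span {x}" S] Suc.prems(1) x(1)
    by (simp add: span_minimal)
  moreover have "dim (span {x}) = 1" using x(2) by auto
  ultimately have dim_S': "dim S' = n" using Suc.prems(3) by simp
  have subspace_S': "subspace S'"
    using Suc.prems(1) by (auto simp: S'_def subspace_def inner_add_right)
  have invariant_S': "A *v y \<in> S'" if "y \<in> S'" for y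
  proof -
    have "x \<bullet> (A *v y) = (A *v x) \<bullet> y" using inner_matrix_vector_mult_transpose[of A x y] sym by simp
    with that x(3) Suc.prems(2) show ?thesis by (simp add: S'_def)
  qed
  obtain E where E: "finite E" "E \<subseteq> S'" "pairwise orthogonal E" "card E = n"
     "\<forall>e\<in>E. norm e = 1 \<and> (\<exists>\<mu>. A *v e = \<mu> *\<^sub>R e)"
    using Suc.IH[OF subspace_S' invariant_S' dim_S'] by blast
  have "x \<notin> E" using E(2) x(2) by (auto simp: S'_def)
  with E x show ?case
    by (intro exI[of _ "insert x E"])
      (auto simp: S'_def pairwise_insert orthogonal_def[abs_def] inner_commute)
qed

theorem symmetric_orthogonally_diagonalizable:
  fixes A :: "real^'n^'n"
  assumes sym: "transpose A = A"
  obtains U \<mu> where "orthogonal_matrix U" and "A ** U = U ** diag_mat \<mu>"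
proof -
  obtain E where E: "finite E" "pairwise orthogonal E" "card E = CARD('n)"
     "\<forall>e\<in>E. norm e = 1 \<and> (\<exists>\<mu>. A *v e = \<mu> *\<^sub>R e)"
    using symmetric_orthonormal_eigenvectors_in_invariant_subspace[OF sym, of UNIV] by auto
  obtain f where f: "\<And>e. e \<in> E \<Longrightarrow> A *v e = f e *\<^sub>R e" using E(4) by metis
  obtain h where h: "bij_betw h (UNIV :: 'n set) E"
    using finite_same_card_bij[of "UNIV :: 'n set" E] E(1,3) by auto
  define U :: "real^'n^'n" where "U = transpose (\<chi> j. h j)"
  have col: "column j U = h j" for j by (simp add: U_def column_def transpose_def)
  have "orthogonal_matrix U"
    unfolding orthogonal_matrix_orthonormal_columns col
    using E(2,4) h by (auto simp: pairwise_def bij_betw_def inj_eq dest: bij_betwE)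
  moreover have "A ** U = U ** diag_mat (\<chi> j. f (h j))"
    using f[OF bij_betwE[OF h, rule_format, OF UNIV_I]]
    by (simp add: vec_eq_iff matrix_matrix_mult_def matrix_vector_mult_def U_def transpose_def
        diag_mat_def mult_delta_right)
  ultimately show ?thesis by (rule that)
qed

lemma svd_of_invertible:
  fixes M :: "real^'n^'n"
  assumes "invertible M"
  obtains s U V where "\<forall>i. s $ i \<ge> 0" and "orthogonal_matrix U" and "orthogonal_matrix V"
    and "M = U ** diag_mat s ** transpose V"
proof -
  have "transpose (transpose M ** M) = transpose M ** M" by (simp add: matrix_transpose_mul)
  then obtain V \<mu> where V: "orthogonal_matrix V" and MV: "(transpose M ** M) ** V = V ** diag_mat \<mu>"
    using symmetric_orthogonally_diagonalizable by blast
  define W where "W = M ** V"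
  have WW: "transpose W ** W = diag_mat \<mu>"
    using MV V unfolding W_def orthogonal_matrix_def
    by (metis matrix_mul_assoc matrix_mul_lid matrix_transpose_mul)
  have "invertible W"
    unfolding W_def by (intro invertible_mult assms orthogonal_matrix_invertible V)
  have \<mu>_pos: "\<mu> $ j > 0" for j
  proof -
    have "W *v axis j 1 \<noteq> 0"
      using inj_matrix_vector_mult[OF \<open>invertible W\<close>]
      by (metis axis_eq_0_iff injD matrix_vector_mult_0_right zero_neq_one)
    moreover have "(W *v axis j 1) \<bullet> (W *v axis j 1) = \<mu> $ j"
      by (simp add: inner_matrix_vector_mult_transpose matrix_vector_mul_assoc WW diag_mat_axis
          inner_axis_axis del: transpose_matrix_vector)
    ultimately show ?thesis by (metis inner_gt_zero_iff)
  qed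
  define s where "s = (\<chi> i. sqrt (\<mu> $ i))"
  define U where "U = W ** diag_mat (\<chi> i. inverse (s $ i))"
  have s_pos: "s $ i > 0" for i using \<mu>_pos by (simp add: s_def)
  have "transpose U ** U = mat 1"
    using \<mu>_pos s_pos
    by (simp add: U_def matrix_transpose_mul matrix_mul_assoc[symmetric])
      (simp add: matrix_mul_assoc WW diag_mat_mult_diag_mat s_def
        field_simps abs_of_pos less_imp_neq[symmetric])
  then have "orthogonal_matrix U" by (simp add: orthogonal_matrix)
  moreover have "U ** diag_mat s = W"
    using s_pos by (simp add: U_def matrix_mul_assoc[symmetric] diag_mat_mult_diag_mat
        less_imp_neq[symmetric])
  then have "M = U ** diag_mat s ** transpose V"
    using V by (simp add: W_def matrix_mul_assoc[symmetric] orthogonal_matrix_def)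
  moreover have "\<forall>i. s $ i \<ge> 0" using s_pos less_imp_le by blast
  ultimately show ?thesis using V that by blast
qed

lemma singular_values_svd:
  fixes M :: "real^'n^'n"
  assumes "invertible M"
  shows "\<forall>i. singular_values M $ i \<ge> 0"
    and "\<exists>U V. orthogonal_matrix U \<and> orthogonal_matrix V \<and>
      M = U ** diag_mat (singular_values M) ** transpose V"
proof -
  have "\<exists>s. (\<forall>i. s $ i \<ge> 0) \<and> (\<exists>U V. orthogonal_matrix U \<and> orthogonal_matrix V \<and>
      M = U ** diag_mat s ** transpose V)"
    using svd_of_invertible[OF assms] by metis
  from someI_ex[OF this, folded singular_values_def]
  show "\<forall>i. singular_values M $ i \<ge> 0"
    and "\<exists>U V. orthogonal_matrix U \<and> orthogonal_matrix V \<and>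
      M = U ** diag_mat (singular_values M) ** transpose V" by blast+
qed

lemma svd_gram_diagonalization:
  fixes M U V :: "real^'n^'n"
  assumes "orthogonal_matrix U" and "orthogonal_matrix V" and "M = U ** diag_mat s ** transpose V"
  shows "(M ** transpose M) ** U = U ** diag_mat (\<chi> i. (s $ i)\<^sup>2)"
  using assms
  by (simp add: matrix_transpose_mul matrix_mul_assoc[symmetric] orthogonal_matrix_def)
    (simp add: matrix_mul_assoc diag_mat_mult_diag_mat power2_eq_square)

lemma eigenvalue_gram_singular_value:
  fixes M :: "real^'n^'n"
  assumes "invertible M"
  shows "eigenvalue (M ** transpose M) ((singular_values M $ i)\<^sup>2)"
    and "eigenvalue (transpose M ** M) ((singular_values M $ i)\<^sup>2)"
proof -
  obtain U V where U: "orthogonal_matrix U" and V: "orthogonal_matrix V"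
    and M: "M = U ** diag_mat (singular_values M) ** transpose V"
    using singular_values_svd(2)[OF assms] by blast
  from arg_cong[OF M, of transpose]
  have "transpose M = V ** diag_mat (singular_values M) ** transpose U"
    by (simp add: matrix_transpose_mul matrix_mul_assoc)
  note gram = svd_gram_diagonalization[OF U V M] svd_gram_diagonalization[OF V U this]
  show "eigenvalue (M ** transpose M) ((singular_values M $ i)\<^sup>2)"
    using eigenvalue_similar[OF gram(1)[symmetric] orthogonal_matrix_invertible[OF U]
        eigenvalue_diag_mat] by simp
  show "eigenvalue (transpose M ** M) ((singular_values M $ i)\<^sup>2)"
    using eigenvalue_similar[OF gram(2)[symmetric] orthogonal_matrix_invertible[OF V]
        eigenvalue_diag_mat] by simp
qed

lemma spec_norm_le_sqrt:
  fixes M :: "real^'n^'n"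
  assumes "invertible M" and "\<And>\<mu>. eigenvalue (M ** transpose M) \<mu> \<Longrightarrow> \<mu> \<le> b"
  shows "spec_norm M \<le> sqrt b"
proof -
  have "(singular_values M $ i)\<^sup>2 \<le> b" for i
    by (rule assms(2)[OF eigenvalue_gram_singular_value(1)[OF assms(1)]])
  with singular_values_svd(1)[OF assms(1)] show ?thesis
    by (simp add: spec_norm_def real_le_rsqrt)
qed

lemma square_powr_quarter:
  fixes a :: real
  assumes "0 \<le> a"
  shows "(a\<^sup>2) powr (1/4) = sqrt a"
proof -
  have "(a\<^sup>2) powr (1/4) = (a powr 2) powr (1/4)" using assms by (simp add: powr_numeral)
  also have "\<dots> = sqrt a" unfolding powr_powr using assms by (simp add: powr_half_sqrt)
  finally show ?thesis .
qed

lemma schatten4_le: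
  fixes M :: "real^'n^'n"
  assumes "invertible M" and "\<And>\<mu>. eigenvalue (transpose M ** M) \<mu> \<Longrightarrow> \<mu> \<le> b"
  shows "schatten4 M \<le> real CARD('n) powr (1/4) * sqrt b"
proof -
  have sq_le: "(singular_values M $ i)\<^sup>2 \<le> b" for i
    by (rule assms(2)[OF eigenvalue_gram_singular_value(2)[OF assms(1)]])
  then have "0 \<le> b" by (meson order_trans zero_le_power2)
  have "(singular_values M $ i) ^ 4 \<le> b\<^sup>2" for i
    using power_mono[OF sq_le[of i], of 2] by (simp flip: power_mult)
  then have "(\<Sum>i\<in>UNIV. (singular_values M $ i) ^ 4) \<le> real CARD('n) * b\<^sup>2"
    using sum_mono[of UNIV "\<lambda>i. (singular_values M $ i) ^ 4" "\<lambda>_. b\<^sup>2"] by simp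
  then have "schatten4 M \<le> (real CARD('n) * b\<^sup>2) powr (1/4)"
    unfolding schatten4_def by (intro powr_mono2) (simp_all add: sum_nonneg)
  also have "\<dots> = real CARD('n) powr (1/4) * sqrt b"
    using \<open>0 \<le> b\<close> by (simp add: powr_mult square_powr_quarter)
  finally show ?thesis .
qed

lemma invertible_matrix_inv:
  fixes A :: "real^'n^'n"
  assumes "invertible A"
  shows "invertible (matrix_inv A)"
  unfolding invertible_def using matrix_inv[OF assms] by blast

lemma gram_mult_gram_matrix_inv:
  fixes A :: "real^'n^'n"
  assumes "invertible A"
  shows "(A ** transpose A) ** (transpose (matrix_inv A) ** matrix_inv A) = mat 1"
proof -
  have "transpose A ** transpose (matrix_inv A) = mat 1"
    using matrix_inv(2)[OF assms] by (metis matrix_transpose_mul transpose_mat)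
  then have "(A ** transpose A) ** (transpose (matrix_inv A) ** matrix_inv A) = A ** matrix_inv A"
    by (metis matrix_mul_assoc matrix_mul_rid)
  with matrix_inv(1)[OF assms] show ?thesis by simp
qed

lemma kappa_le_if_gram_eigenvalues_near_one:
  fixes B :: "real^'n^'n"
  assumes B: "invertible B" and "\<delta> < 1"
    and near_one: "\<And>\<mu>. eigenvalue (B ** transpose B) \<mu> \<Longrightarrow> \<bar>\<mu> - 1\<bar> \<le> \<delta>"
  shows "kappa B \<le> real CARD('n) powr (1/4) * sqrt ((1 + \<delta>) / (1 - \<delta>))"
proof -
  define Bi where "Bi = matrix_inv B"
  have "0 \<le> \<delta>"
    using near_one[OF eigenvalue_gram_singular_value(1)[OF B]] by (meson abs_ge_zero order_trans)
  have "spec_norm B \<le> sqrt (1 + \<delta>)"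
    using B near_one by (intro spec_norm_le_sqrt) fastforce+
  moreover have "schatten4 Bi \<le> real CARD('n) powr (1/4) * sqrt (1 / (1 - \<delta>))"
  proof (rule schatten4_le)
    show "invertible Bi" unfolding Bi_def using B by (rule invertible_matrix_inv)
    fix \<mu> assume "eigenvalue (transpose Bi ** Bi) \<mu>"
    from eigenvalue_inverse[OF gram_mult_gram_matrix_inv[OF B, folded Bi_def] this] near_one
    have "1 - \<delta> \<le> inverse \<mu>" by fastforce
    with \<open>\<delta> < 1\<close> show "\<mu> \<le> 1 / (1 - \<delta>)"
      using le_imp_inverse_le[of "1 - \<delta>" "inverse \<mu>"] by (simp add: inverse_eq_divide)
  qed
  ultimately have "kappa B \<le> sqrt (1 + \<delta>) * (real CARD('n) powr (1/4) * sqrt (1 / (1 - \<delta>)))"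
    unfolding kappa_def Bi_def[symmetric]
    by (intro mult_mono) (simp_all add: \<open>0 \<le> \<delta>\<close> schatten4_def)
  also have "\<dots> = real CARD('n) powr (1/4) * sqrt ((1 + \<delta>) / (1 - \<delta>))"
    by (simp add: real_sqrt_divide)
  finally show ?thesis .
qed

lemma gram_diag_pos:
  fixes L :: "real^'n^'n"
  assumes "invertible L"
  shows "(L ** transpose L) $ i $ i > 0"
proof -
  have "transpose L *v axis i 1 \<noteq> 0"
    using inj_matrix_vector_mult[OF transpose_invertible[OF assms]]
    by (metis axis_eq_0_iff injD matrix_vector_mult_0_right zero_neq_one)
  moreover have "(transpose L *v axis i 1) \<bullet> (transpose L *v axis i 1) = (L ** transpose L) $ i $ i"
    by (simp add: inner_matrix_vector_mult_transpose matrix_vector_mul_assoc inner_axis'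
        matrix_vector_mult_basis del: transpose_matrix_vector)
      (simp add: inner_vec_def matrix_matrix_mult_def row_def transpose_def)
  ultimately show ?thesis by (metis inner_gt_zero_iff)
qed

lemma eigenvalue_correlation_near_one:
  fixes C :: "real^'n^'n"
  assumes pos: "\<And>i. C $ i $ i > 0"
    and dominant: "\<And>i. (\<Sum>j\<in>UNIV - {i}. \<bar>C $ i $ j / C $ i $ i\<bar>) \<le> \<delta>"
    and "eigenvalue (D ** C ** D) \<mu>"
    and D: "D = diag_mat (\<chi> i. inverse (sqrt (C $ i $ i)))"
  shows "\<bar>\<mu> - 1\<bar> \<le> \<delta>"
proof -
  define P where "P = diag_mat (\<chi> i. inverse (C $ i $ i)) ** C"
  have "D ** D = diag_mat (\<chi> i. inverse (C $ i $ i))"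
    using pos by (simp add: D diag_mat_mult_diag_mat less_imp_le flip: inverse_mult_distrib)
  then have "D ** (D ** C ** D) = P ** D" by (simp add: P_def matrix_mul_assoc)
  moreover have "invertible D"
    unfolding D by (intro invertible_diag_mat) (simp add: pos less_imp_neq[symmetric])
  ultimately have "eigenvalue P \<mu>" using eigenvalue_similar \<open>eigenvalue (D ** C ** D) \<mu>\<close> by blast
  then obtain i where "\<bar>\<mu> - P $ i $ i\<bar> \<le> (\<Sum>j\<in>UNIV - {i}. \<bar>P $ i $ j\<bar>)" by (rule gershgorin)
  also have "\<dots> \<le> \<delta>" using dominant[of i] by (simp add: P_def divide_inverse mult.commute)
  finally show ?thesis using pos[of i] by (simp add: P_def)
qed

theorem proposition1:
  fixes L :: "real^'n^'n" and \<delta> :: real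
  assumes "invertible L"
    and "\<delta> < 1"
    and "\<forall>i. (\<Sum>j\<in>UNIV - {i}.
           \<bar>(L ** transpose L) $ i $ j / (L ** transpose L) $ i $ i\<bar>) \<le> \<delta>"
  shows "kappa (matrix_inv (diag_mat (\<chi> i. sqrt ((L ** transpose L) $ i $ i))) ** L)
           \<le> real CARD('n) powr (1/4) * sqrt ((1 + \<delta>) / (1 - \<delta>))"
proof -
  define C where "C = L ** transpose L"
  define D where "D = diag_mat (\<chi> i. inverse (sqrt (C $ i $ i)))"
  have pos: "C $ i $ i > 0" for i unfolding C_def using gram_diag_pos[OF assms(1)] .
  have "matrix_inv (diag_mat (\<chi> i. sqrt (C $ i $ i))) = D"
    unfolding D_def by (subst matrix_inv_diag_mat) (simp_all add: pos less_imp_neq[symmetric])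
  moreover have "kappa (D ** L) \<le> real CARD('n) powr (1/4) * sqrt ((1 + \<delta>) / (1 - \<delta>))"
  proof (rule kappa_le_if_gram_eigenvalues_near_one[OF _ assms(2)])
    show "invertible (D ** L)"
      unfolding D_def by (intro invertible_mult invertible_diag_mat assms(1))
        (simp add: pos less_imp_neq[symmetric])
    have "(D ** L) ** transpose (D ** L) = D ** C ** D"
      by (simp add: C_def D_def matrix_transpose_mul matrix_mul_assoc)
    then show "\<bar>\<mu> - 1\<bar> \<le> \<delta>" if "eigenvalue ((D ** L) ** transpose (D ** L)) \<mu>" for \<mu>
      using eigenvalue_correlation_near_one[OF pos assms(3)[rule_format, folded C_def] _ D_def]
        that by simp
  qed
  ultimately show ?thesis by (simp add: C_def)
qed

end
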